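(* Let $P\subset\mathbb{R}^d$ be a simple $d$-polytope, let $H^+$ be a closed halfspace whose bounding hyperplane $\overline{H}$ contains no vertex of $P$ and meets the interior of $P$, and let $P'=P\cap H^+$. Call a face of $P'$ new if it is contained in $\overline{H}$; for a new face $f'$ of $P'$, its parent face is the face $f$ of $P$ with $f'=\overline{H}\cap f$ (so a new $k$-face has a parent $(k+1)$-face). Let $0\le k\le d-2$ and let $u',v'$ be new $k$-faces of $P'$ with parent $(k+1)$-faces $u,v$ of $P$. Then $u'$ and $v'$ lie on a common $(k+1)$-face of $P'$ if and only if $u$ and $v$ lie on a common $(k+2)$-face of $P$.
   Context: A $d$-polytope is simple if every vertex lies in exactly $d$ facets. A $k$-face is a face of dimension $k$; faces of a polytope are $\emptyset$, the polytope itself, and intersections of the polytope with supporting hyperplanes. *)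

theory Defs
  imports "HOL-Analysis.Analysis"
begin

definition simple_polytope :: "'a::euclidean_space set \<Rightarrow> bool" where
  "simple_polytope P \<longleftrightarrow> polytope P \<and> aff_dim P = int DIM('a) \<and>
     (\<forall>v. v extreme_point_of P \<longrightarrow> card {F. F facet_of P \<and> v \<in> F} = DIM('a))"

end

theory Submission
  imports Defs
begin

text \<open>Since no vertex of \<open>P\<close> lies on \<open>H\<close>, every face of \<open>P\<close> meeting \<open>H\<close> has points strictly
  on both sides of it, so its section with \<open>H\<close> has one dimension less, and a face of \<open>P\<close> is
  determined by that section. A face of \<open>P'\<close> inside \<open>H\<close> is the section \<open>G \<inter> H\<close> of the smallest
  face \<open>G\<close> of \<open>P\<close> containing one of its relative interior points. Hence the new \<open>(k+1)\<close>-faces of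
  \<open>P'\<close> are exactly the sections of the \<open>(k+2)\<close>-faces of \<open>P\<close> meeting \<open>H\<close>, while a \<open>(k+1)\<close>-face of
  \<open>P'\<close> not inside \<open>H\<close> contains only one new \<open>k\<close>-face, forcing \<open>u' = v'\<close> and \<open>u = v\<close>.\<close>

lemma aff_dim_Int_hyperplane_le:
  fixes S :: "'a::euclidean_space set"
  assumes "\<not> S \<subseteq> {x. a \<bullet> x = b}"
  shows "aff_dim (S \<inter> {x. a \<bullet> x = b}) \<le> aff_dim S - 1"
proof -
  let ?H = "{x. a \<bullet> x = b}"
  have "S \<noteq> {}" using assms by blast
  then have "aff_dim S \<ge> 0" using aff_dim_empty[of S] aff_dim_geq[of S] by linarith
  moreover have "\<not> affine hull S \<subseteq> ?H" using assms hull_subset[of S affine] by blast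
  ultimately have "aff_dim (affine hull S \<inter> ?H) \<le> aff_dim S - 1"
    using aff_dim_affine_Int_hyperplane[OF affine_affine_hull, of S a b] by auto
  moreover have "aff_dim (S \<inter> ?H) \<le> aff_dim (affine hull S \<inter> ?H)"
    by (rule aff_dim_subset) (use hull_subset[of S affine] in blast)
  ultimately show ?thesis by linarith
qed

lemma in_affine_hull_insert_Int_hyperplane:
  fixes S :: "'a::euclidean_space set"
  assumes "convex S" "x \<in> S" "w \<in> S" "(a \<bullet> x - b) * (a \<bullet> w - b) < 0"
  shows "x \<in> affine hull (insert w (S \<inter> {x. a \<bullet> x = b}))"
proof -
  define t where "t = (a \<bullet> x - b) / (a \<bullet> x - a \<bullet> w)"
  have t0: "0 < t" and t1: "t < 1" using assms(4) unfolding t_def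
    by (auto simp: mult_less_0_iff divide_simps)
  define y where "y = (1 - t) *\<^sub>R x + t *\<^sub>R w" \<comment> \<open>where \<open>[x, w]\<close> crosses the hyperplane\<close>
  let ?A = "affine hull (insert w (S \<inter> {x. a \<bullet> x = b}))"
  have "a \<bullet> y = a \<bullet> x - t * (a \<bullet> x - a \<bullet> w)"
    unfolding y_def by (simp add: inner_add_right algebra_simps)
  also have "t * (a \<bullet> x - a \<bullet> w) = a \<bullet> x - b"
    using assms(4) unfolding t_def by (auto simp: mult_less_0_iff)
  finally have "a \<bullet> y = b" by simp
  moreover have "y \<in> S" using assms(1-3) t0 t1 unfolding y_def convex_def by auto
  ultimately have yA: "y \<in> ?A" by (simp add: hull_inc)
  have wA: "w \<in> ?A" by (simp add: hull_inc)
  have "(1 / (1 - t)) *\<^sub>R y + (- t / (1 - t)) *\<^sub>R w = (1 / (1 - t)) *\<^sub>R ((1 - t) *\<^sub>R x)"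
    unfolding y_def by (simp add: scaleR_add_right scaleR_diff_right divide_inverse algebra_simps)
  then have "x = (1 / (1 - t)) *\<^sub>R y + (- t / (1 - t)) *\<^sub>R w" using t1 by simp
  moreover have "1 / (1 - t) + - t / (1 - t) = 1" using t1 by (simp add: divide_simps)
  ultimately show ?thesis using mem_affine[OF affine_affine_hull yA wA] by metis
qed

lemma aff_dim_le_Int_hyperplane_plus_1:
  fixes S :: "'a::euclidean_space set"
  assumes S: "convex S" and p: "p \<in> S" "a \<bullet> p < b" and q: "q \<in> S" "a \<bullet> q > b"
  shows "aff_dim S \<le> aff_dim (S \<inter> {x. a \<bullet> x = b}) + 1"
proof -
  let ?H = "{x. a \<bullet> x = b}"
  let ?T = "insert p (S \<inter> ?H)"
  have qT: "q \<in> affine hull ?T"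
    by (rule in_affine_hull_insert_Int_hyperplane[OF S q(1) p(1)]) (use p q in \<open>simp add: mult_pos_neg\<close>)
  have "S \<subseteq> affine hull ?T"
  proof
    fix x assume x: "x \<in> S"
    consider "a \<bullet> x = b" | "a \<bullet> x > b" | "a \<bullet> x < b" by linarith
    then show "x \<in> affine hull ?T"
    proof cases
      case 1 then show ?thesis using x by (auto intro: hull_inc)
    next
      case 2 then show ?thesis
        by (intro in_affine_hull_insert_Int_hyperplane[OF S x p(1)]) (use p in \<open>simp add: mult_pos_neg\<close>)
    next
      case 3
      then have "x \<in> affine hull (insert q (S \<inter> ?H))"
        by (intro in_affine_hull_insert_Int_hyperplane[OF S x q(1)]) (use q in \<open>simp add: mult_neg_pos\<close>)
      moreover have "affine hull (insert q (S \<inter> ?H)) \<subseteq> affine hull ?T"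
        by (rule hull_minimal) (use qT in \<open>auto intro: hull_inc affine_affine_hull\<close>)
      ultimately show ?thesis by blast
    qed
  qed
  then have "aff_dim S \<le> aff_dim (affine hull ?T)" by (rule aff_dim_subset)
  then show ?thesis unfolding aff_dim_affine_hull aff_dim_insert by (simp split: if_splits)
qed

lemma aff_dim_convex_Int_hyperplane:
  fixes S :: "'a::euclidean_space set"
  assumes "convex S" "p \<in> S" "a \<bullet> p < b" "q \<in> S" "a \<bullet> q > b"
  shows "aff_dim (S \<inter> {x. a \<bullet> x = b}) = aff_dim S - 1"
  using aff_dim_Int_hyperplane_le[of S a b] aff_dim_le_Int_hyperplane_plus_1[OF assms] assms(2,3)
  by force

lemma polytope_meeting_hyperplane_has_point_below:
  fixes C :: "'a::euclidean_space set"
  assumes C: "polytope C" and no_vertex: "\<forall>x. x extreme_point_of C \<longrightarrow> a \<bullet> x \<noteq> b"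
    and meets: "C \<inter> {x. a \<bullet> x = b} \<noteq> {}"
  shows "\<exists>p\<in>C. a \<bullet> p < b"
proof (rule ccontr)
  assume "\<not> ?thesis"
  then have "{x. x extreme_point_of C} \<subseteq> {x. a \<bullet> x > b}"
    using no_vertex by (force simp: extreme_point_of_def)
  then have "convex hull {x. x extreme_point_of C} \<subseteq> {x. a \<bullet> x > b}"
    by (rule hull_minimal) (rule convex_halfspace_gt)
  then show False
    using meets Krein_Milman_Minkowski[OF polytope_imp_compact[OF C] polytope_imp_convex[OF C]]
    by auto
qed

lemma aff_dim_polytope_Int_hyperplane:
  fixes C :: "'a::euclidean_space set"
  assumes C: "polytope C" and no_vertex: "\<forall>x. x extreme_point_of C \<longrightarrow> a \<bullet> x \<noteq> b"
    and meets: "C \<inter> {x. a \<bullet> x = b} \<noteq> {}"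
  shows "aff_dim (C \<inter> {x. a \<bullet> x = b}) = aff_dim C - 1"
proof -
  obtain p where "p \<in> C" "a \<bullet> p < b"
    using polytope_meeting_hyperplane_has_point_below[OF assms] by blast
  moreover obtain q where "q \<in> C" "-a \<bullet> q < -b"
    using polytope_meeting_hyperplane_has_point_below[OF C, of "-a" "-b"] no_vertex meets by auto
  ultimately show ?thesis
    using aff_dim_convex_Int_hyperplane[OF polytope_imp_convex[OF C]] by auto
qed

lemma aff_dim_face_Int_hyperplane:
  fixes P :: "'a::euclidean_space set"
  assumes P: "polytope P" and no_vertex: "\<forall>x. x extreme_point_of P \<longrightarrow> a \<bullet> x \<noteq> b"
    and C: "C face_of P" and meets: "C \<inter> {x. a \<bullet> x = b} \<noteq> {}"
  shows "aff_dim (C \<inter> {x. a \<bullet> x = b}) = aff_dim C - 1"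
  using aff_dim_polytope_Int_hyperplane[OF face_of_polytope_polytope[OF P C] _ meets]
    no_vertex extreme_point_of_face[OF C] by blast

text \<open>A face \<open>G\<close> missing part of \<open>u\<close> would cut \<open>u\<close> in a proper face of smaller dimension
  with the same section.\<close>
lemma face_subset_if_Int_hyperplane_subset:
  fixes P :: "'a::euclidean_space set"
  assumes P: "polytope P" and no_vertex: "\<forall>x. x extreme_point_of P \<longrightarrow> a \<bullet> x \<noteq> b"
    and u: "u face_of P" and meets: "u \<inter> {x. a \<bullet> x = b} \<noteq> {}"
    and G: "G face_of P" and sub: "u \<inter> {x. a \<bullet> x = b} \<subseteq> G"
  shows "u \<subseteq> G"
proof (rule ccontr)
  let ?H = "{x. a \<bullet> x = b}"
  assume "\<not> u \<subseteq> G"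
  then have "u \<inter> G \<noteq> u" by blast
  moreover have "(u \<inter> G) face_of u"
    using face_of_subset[OF face_of_Int[OF u G]] face_of_imp_subset[OF u] by blast
  ultimately have "aff_dim (u \<inter> G) < aff_dim u"
    using face_of_aff_dim_lt[OF face_of_imp_convex[OF u]] by blast
  moreover have "(u \<inter> G) \<inter> ?H = u \<inter> ?H" using sub by blast
  ultimately show False
    using aff_dim_face_Int_hyperplane[OF P no_vertex face_of_Int[OF u G]]
      aff_dim_face_Int_hyperplane[OF P no_vertex u meets] meets by force
qed

lemma face_eq_if_Int_hyperplane_eq:
  fixes P :: "'a::euclidean_space set"
  assumes P: "polytope P" and no_vertex: "\<forall>x. x extreme_point_of P \<longrightarrow> a \<bullet> x \<noteq> b"
    and u: "u face_of P" and v: "v face_of P"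
    and eq: "u \<inter> {x. a \<bullet> x = b} = v \<inter> {x. a \<bullet> x = b}" and meets: "u \<inter> {x. a \<bullet> x = b} \<noteq> {}"
  shows "u = v"
proof -
  have "v \<inter> {x. a \<bullet> x = b} \<noteq> {}" using eq meets by simp
  then show ?thesis
    using face_subset_if_Int_hyperplane_subset[OF P no_vertex u meets v]
      face_subset_if_Int_hyperplane_subset[OF P no_vertex v _ u] eq by blast
qed

lemma face_of_Int_hyperplane_halfspace:
  fixes P :: "'a::euclidean_space set"
  assumes "convex P" "G face_of P"
  shows "(G \<inter> {x. a \<bullet> x = b}) face_of (P \<inter> {x. a \<bullet> x \<ge> b})"
proof -
  let ?Q = "P \<inter> {x. a \<bullet> x \<ge> b}"
  have "(G \<inter> {x. a \<bullet> x \<ge> b}) face_of ?Q"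
    by (rule face_of_Int_Int[OF assms(2) face_of_refl[OF convex_halfspace_ge]])
  moreover have "(?Q \<inter> {x. a \<bullet> x = b}) face_of ?Q"
    by (rule face_of_Int_supporting_hyperplane_ge) (auto simp: assms(1) convex_Int convex_halfspace_ge)
  ultimately have "(G \<inter> {x. a \<bullet> x \<ge> b}) \<inter> (?Q \<inter> {x. a \<bullet> x = b}) face_of ?Q"
    by (rule face_of_Int)
  moreover have "(G \<inter> {x. a \<bullet> x \<ge> b}) \<inter> (?Q \<inter> {x. a \<bullet> x = b}) = G \<inter> {x. a \<bullet> x = b}"
    using face_of_imp_subset[OF assms(2)] by auto
  ultimately show ?thesis by simp
qed

text \<open>The smallest face of \<open>P\<close> containing \<open>z\<close> has \<open>z\<close> in its relative interior:
  otherwise \<open>z\<close> would lie in one of its facets.\<close>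
lemma polyhedron_exists_face_rel_interior:
  fixes P :: "'a::euclidean_space set"
  assumes P: "polyhedron P" and z: "z \<in> P"
  shows "\<exists>G. G face_of P \<and> z \<in> rel_interior G"
proof -
  define G where "G = \<Inter> {T. T face_of P \<and> z \<in> T}"
  have "P \<in> {T. T face_of P \<and> z \<in> T}" using face_of_refl[OF polyhedron_imp_convex[OF P]] z by blast
  then have GP: "G face_of P" unfolding G_def by (intro face_of_Inter) auto
  have zG: "z \<in> G" unfolding G_def by auto
  have "z \<in> rel_interior G"
  proof (rule ccontr)
    assume "z \<notin> rel_interior G"
    then have "z \<in> rel_frontier G" using zG closure_subset unfolding rel_frontier_def by auto
    then obtain E where E: "E facet_of G" "z \<in> E"
      using rel_frontier_of_polyhedron[OF face_of_polyhedron_polyhedron[OF P GP]] by auto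
    have "E face_of P" using face_of_trans[OF facet_of_imp_face_of[OF E(1)] GP] .
    then have "G \<subseteq> E" using E(2) unfolding G_def by blast
    then have "E = G" using facet_of_imp_subset[OF E(1)] by auto
    then show False using E(1) by (simp add: facet_of_def)
  qed
  then show ?thesis using GP by blast
qed

lemma face_of_Int_halfspace_in_hyperplane:
  fixes P :: "'a::euclidean_space set"
  assumes P: "polyhedron P" and F: "F face_of (P \<inter> {x. a \<bullet> x \<ge> b})"
    and new: "F \<subseteq> {x. a \<bullet> x = b}" and ne: "F \<noteq> {}"
  shows "\<exists>G. G face_of P \<and> F = G \<inter> {x. a \<bullet> x = b}"
proof -
  let ?H = "{x. a \<bullet> x = b}"
  have cP: "convex P" using polyhedron_imp_convex[OF P] .
  obtain z where zF: "z \<in> rel_interior F"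
    using ne rel_interior_eq_empty face_of_imp_convex[OF F] by blast
  then have zH: "z \<in> ?H" and "z \<in> P"
    using rel_interior_subset new face_of_imp_subset[OF F] by blast+
  then obtain G where G: "G face_of P" "z \<in> rel_interior G"
    using polyhedron_exists_face_rel_interior[OF P] by blast
  have "rel_interior (G \<inter> ?H) = rel_interior G \<inter> ?H"
    by (rule convex_affine_rel_interior_Int[OF face_of_imp_convex[OF G(1)] affine_hyperplane])
      (use G(2) zH in blast)
  then have "rel_interior F \<inter> rel_interior (G \<inter> ?H) \<noteq> {}" using zF G(2) zH by blast
  then have "F = G \<inter> ?H" by (rule face_of_eq[OF F face_of_Int_hyperplane_halfspace[OF cP G(1)]])
  then show ?thesis using G(1) by blast
qed

lemma face_of_Int_halfspace_in_hyperplane_aff_dim: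
  fixes P :: "'a::euclidean_space set"
  assumes P: "polytope P" and no_vertex: "\<forall>x. x extreme_point_of P \<longrightarrow> a \<bullet> x \<noteq> b"
    and F: "F face_of (P \<inter> {x. a \<bullet> x \<ge> b})" and new: "F \<subseteq> {x. a \<bullet> x = b}" and ne: "F \<noteq> {}"
  shows "\<exists>G. G face_of P \<and> F = G \<inter> {x. a \<bullet> x = b} \<and> aff_dim G = aff_dim F + 1"
proof -
  obtain G where G: "G face_of P" "F = G \<inter> {x. a \<bullet> x = b}"
    using face_of_Int_halfspace_in_hyperplane[OF polytope_imp_polyhedron[OF P] F new ne] by blast
  moreover have "aff_dim F = aff_dim G - 1"
    using aff_dim_face_Int_hyperplane[OF P no_vertex G(1)] G(2) ne by simp
  ultimately show ?thesis by auto
qed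

lemma face_Int_hyperplane_face_of_Int_halfspace:
  fixes P :: "'a::euclidean_space set"
  assumes P: "polytope P" and no_vertex: "\<forall>x. x extreme_point_of P \<longrightarrow> a \<bullet> x \<noteq> b"
    and G: "G face_of P" and meets: "G \<inter> {x. a \<bullet> x = b} \<noteq> {}"
  shows "(G \<inter> {x. a \<bullet> x = b}) face_of (P \<inter> {x. a \<bullet> x \<ge> b})"
    and "aff_dim (G \<inter> {x. a \<bullet> x = b}) = aff_dim G - 1"
  using face_of_Int_hyperplane_halfspace[OF polytope_imp_convex[OF P] G]
    aff_dim_face_Int_hyperplane[OF P no_vertex G meets] by auto

lemma face_of_eq_Int_hyperplane:
  fixes Q :: "'a::euclidean_space set"
  assumes F: "F face_of Q" and not_new: "\<not> F \<subseteq> {x. a \<bullet> x = b}"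
    and w: "w face_of Q" "w \<subseteq> F \<inter> {x. a \<bullet> x = b}" and dim: "aff_dim F \<le> aff_dim w + 1"
  shows "w = F \<inter> {x. a \<bullet> x = b}"
proof (rule ccontr)
  let ?E = "F \<inter> {x. a \<bullet> x = b}"
  assume "w \<noteq> ?E"
  moreover have "w face_of ?E"
    by (rule face_of_subset[OF w]) (use face_of_imp_subset[OF F] in blast)
  moreover have "convex ?E" using face_of_imp_convex[OF F] by (simp add: convex_Int convex_hyperplane)
  ultimately have "aff_dim w < aff_dim ?E" using face_of_aff_dim_lt by blast
  then show False using aff_dim_Int_hyperplane_le[OF not_new] dim by linarith
qed

lemma polytope_face_of_superface:
  fixes S :: "'a::euclidean_space set"
  shows "polytope S \<Longrightarrow> T face_of S \<Longrightarrow> T \<noteq> {} \<Longrightarrow> aff_dim T \<le> j \<Longrightarrow> j \<le> aff_dim S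
    \<Longrightarrow> \<exists>G. G face_of S \<and> aff_dim G = j \<and> T \<subseteq> G"
proof (induction "nat (aff_dim S - j)" arbitrary: S)
  case 0
  then have "aff_dim S = j" by simp
  then show ?case using 0 face_of_refl[OF polytope_imp_convex] face_of_imp_subset by blast
next
  case (Suc n)
  then have "T \<noteq> S" by auto
  then obtain E where E: "E facet_of S" "T \<subseteq> E"
    using face_of_polyhedron_subset_facet[OF polytope_imp_polyhedron] Suc.prems by blast
  then have EF: "E face_of S" and "aff_dim E = aff_dim S - 1" by (auto simp: facet_of_def)
  moreover have "polytope E" using face_of_polytope_polytope[OF Suc.prems(1) EF] .
  moreover have "T face_of E" using face_of_subset[OF Suc.prems(2) E(2) face_of_imp_subset[OF EF]] .
  ultimately have "\<exists>G. G face_of E \<and> aff_dim G = j \<and> T \<subseteq> G"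
    using Suc by (intro Suc.hyps(1)) auto
  then show ?case using face_of_trans EF by blast
qed

theorem mainTheorem3:
  fixes P :: "'a::euclidean_space set" and a :: 'a and b :: real and k :: nat
    and u v u' v' :: "'a set"
  assumes simple: "simple_polytope P"
    and a_nz: "a \<noteq> 0"
    and no_vertex: "\<forall>x. x extreme_point_of P \<longrightarrow> a \<bullet> x \<noteq> b"
    and meets_int: "{x. a \<bullet> x = b} \<inter> interior P \<noteq> {}"
    and k_le: "k + 2 \<le> DIM('a)"
    and u'_face: "u' face_of (P \<inter> {x. a \<bullet> x \<ge> b})" and u'_new: "u' \<subseteq> {x. a \<bullet> x = b}"
    and u'_dim: "aff_dim u' = int k"
    and v'_face: "v' face_of (P \<inter> {x. a \<bullet> x \<ge> b})" and v'_new: "v' \<subseteq> {x. a \<bullet> x = b}"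
    and v'_dim: "aff_dim v' = int k"
    and u_face: "u face_of P" and u_par: "u' = {x. a \<bullet> x = b} \<inter> u"
    and u_dim: "aff_dim u = int k + 1"
    and v_face: "v face_of P" and v_par: "v' = {x. a \<bullet> x = b} \<inter> v"
    and v_dim: "aff_dim v = int k + 1"
  shows "(\<exists>F. F face_of (P \<inter> {x. a \<bullet> x \<ge> b}) \<and> aff_dim F = int k + 1 \<and> u' \<subseteq> F \<and> v' \<subseteq> F)
     \<longleftrightarrow> (\<exists>G. G face_of P \<and> aff_dim G = int k + 2 \<and> u \<subseteq> G \<and> v \<subseteq> G)"
proof -
  let ?H = "{x. a \<bullet> x = b}"
  have P: "polytope P" and dim_P: "aff_dim P = int DIM('a)"
    using simple unfolding simple_polytope_def by blast+
  have "u' \<noteq> {}" using u'_dim aff_dim_empty[of u'] by auto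
  then have u_meets: "u \<inter> ?H \<noteq> {}" and v_meets: "v \<inter> ?H \<noteq> {}"
    using u_par v_par u'_dim v'_dim aff_dim_empty[of v'] by auto
  note parent_subset = face_subset_if_Int_hyperplane_subset[OF P no_vertex]
  show ?thesis
  proof
    assume "\<exists>F. F face_of (P \<inter> {x. a \<bullet> x \<ge> b}) \<and> aff_dim F = int k + 1 \<and> u' \<subseteq> F \<and> v' \<subseteq> F"
    then obtain F where F: "F face_of (P \<inter> {x. a \<bullet> x \<ge> b})" "aff_dim F = int k + 1" "u' \<subseteq> F" "v' \<subseteq> F"
      by blast
    show "\<exists>G. G face_of P \<and> aff_dim G = int k + 2 \<and> u \<subseteq> G \<and> v \<subseteq> G"
    proof (cases "F \<subseteq> ?H")
      case True
      then obtain G where G: "G face_of P" "F = G \<inter> ?H" "aff_dim G = int k + 2"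
        using face_of_Int_halfspace_in_hyperplane_aff_dim[OF P no_vertex F(1)] F(2,3) \<open>u' \<noteq> {}\<close>
        by fastforce
      have "u \<subseteq> G" by (rule parent_subset[OF u_face u_meets G(1)]) (use G(2) F(3) u_par in blast)
      moreover have "v \<subseteq> G" by (rule parent_subset[OF v_face v_meets G(1)]) (use G(2) F(4) v_par in blast)
      ultimately show ?thesis using G by blast
    next
      case False
      have "u' = F \<inter> ?H" "v' = F \<inter> ?H"
        by (rule face_of_eq_Int_hyperplane[OF F(1) False]; use u'_face u'_new v'_face v'_new F u'_dim v'_dim in auto)+
      then have "u = v"
        by (intro face_eq_if_Int_hyperplane_eq[OF P no_vertex u_face v_face _ u_meets])
          (use u_par v_par in blast)
      then show ?thesis
        using polytope_face_of_superface[OF P u_face, of "int k + 2"] u_meets u_dim dim_P k_le by auto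
    qed
  next
    assume "\<exists>G. G face_of P \<and> aff_dim G = int k + 2 \<and> u \<subseteq> G \<and> v \<subseteq> G"
    then obtain G where G: "G face_of P" "aff_dim G = int k + 2" "u \<subseteq> G" "v \<subseteq> G" by blast
    then have "G \<inter> ?H \<noteq> {}" using u_meets by blast
    then show "\<exists>F. F face_of (P \<inter> {x. a \<bullet> x \<ge> b}) \<and> aff_dim F = int k + 1 \<and> u' \<subseteq> F \<and> v' \<subseteq> F"
      using face_Int_hyperplane_face_of_Int_halfspace[OF P no_vertex G(1)] G u_par v_par
      by (intro exI[of _ "G \<inter> ?H"]) auto
  qed
qed

end
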